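(* Consider a discrete-time time-invariant closed-loop system $\mathbf{x}_{t+1}=f(\mathbf{x}_t,\pi(\mathbf{x}_t))$ with states constrained to $\mathcal{X}\subseteq\mathbb{R}^{n_x}$, and a target set $\mathcal{X}_T$. Let $\mathcal{P}_t$ ($t\le 0$) be the true backprojection sets and let integers $t_2<t_1\le 0$ be given, together with sets $\bar{\mathcal{P}}_t$ for $t_2\le t\le t_1-1$ satisfying $\mathcal{P}_t\subseteq\bar{\mathcal{P}}_t$ (BP over-approximations). If $\bar{\mathcal{P}}_{t_2}\subseteq\mathcal{P}_{t_1}$, then the set $$\mathcal{I}=\mathcal{P}_{t_1}\cup\bigcup_{t=t_2}^{t_1-1}\bar{\mathcal{P}}_t$$ contains all BP sets for $t\le t_1$, i.e. $\mathcal{P}_t\subseteq\mathcal{I}$ for all $t\le t_1$.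
   Context: True backprojection sets: $\mathcal{P}_0=\mathcal{X}_T$ and, for $t<0$, $\mathcal{P}_t=\{\mathbf{x}\in\mathcal{X}\mid f(\mathbf{x},\pi(\mathbf{x}))\in\mathcal{P}_{t+1}\}$, i.e. the set of states from which the closed-loop system reaches $\mathcal{X}_T$ at time $0$. *)

theory Defs
  imports "HOL-Analysis.Analysis"
begin

text \<open>Backprojection sets indexed by the number of steps k = -t \<ge> 0:
  P_0 = XT, P_{t} = {x \<in> X. f x (pi x) \<in> P_{t+1}}.\<close>
fun bp_nat :: "('a set) \<Rightarrow> ('a set) \<Rightarrow> ('a \<Rightarrow> 'u \<Rightarrow> 'a) \<Rightarrow> ('a \<Rightarrow> 'u) \<Rightarrow> nat \<Rightarrow> 'a set" where
  "bp_nat X XT f pol 0 = XT"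
| "bp_nat X XT f pol (Suc k) = {x \<in> X. f x (pol x) \<in> bp_nat X XT f pol k}"

definition BP :: "('a set) \<Rightarrow> ('a set) \<Rightarrow> ('a \<Rightarrow> 'u \<Rightarrow> 'a) \<Rightarrow> ('a \<Rightarrow> 'u) \<Rightarrow> int \<Rightarrow> 'a set" where
  "BP X XT f pol t = bp_nat X XT f pol (nat (- t))"

end

theory Submission
  imports Defs
begin

text \<open>The one-step backprojection \<open>P \<mapsto> {x \<in> X. f x (pol x) \<in> P}\<close> is monotone, so an
  inclusion \<open>P\<^sub>t\<^sub>2 \<subseteq> P\<^sub>t\<^sub>1\<close> with \<open>t\<^sub>2 < t\<^sub>1\<close> propagates backwards in time:
  \<open>P\<^bsub>t\<^sub>2 - m\<^esub> \<subseteq> P\<^bsub>t\<^sub>1 - m\<^esub>\<close>. By strong induction every \<open>P\<^sub>t\<close> with \<open>t \<le> t\<^sub>1\<close> is therefore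
  contained in one of \<open>P\<^bsub>t\<^sub>2+1\<^esub>, \<dots>, P\<^sub>t\<^sub>1\<close>, and each of these lies in \<open>\<I>\<close>.\<close>

lemma bp_nat_shift_mono:
  assumes "bp_nat X XT f pol j \<subseteq> bp_nat X XT f pol i"
  shows "bp_nat X XT f pol (j + m) \<subseteq> bp_nat X XT f pol (i + m)"
  by (induction m) (use assms in auto)

lemma bp_nat_subset_UN_window:
  assumes "a < b" and "bp_nat X XT f pol b \<subseteq> bp_nat X XT f pol a" and "a \<le> k"
  shows "bp_nat X XT f pol k \<subseteq> (\<Union>j \<in> {a..<b}. bp_nat X XT f pol j)"
  using \<open>a \<le> k\<close>
proof (induction k rule: less_induct)
  case (less k)
  show ?case
  proof (cases "k < b")
    case True
    with less.prems show ?thesis by auto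
  next
    case False
    then obtain m where k: "k = b + m"
      using le_Suc_ex not_less by blast
    have "bp_nat X XT f pol k \<subseteq> bp_nat X XT f pol (a + m)"
      using bp_nat_shift_mono[OF assms(2)] k by simp
    also have "\<dots> \<subseteq> (\<Union>j \<in> {a..<b}. bp_nat X XT f pol j)"
      using less.IH[of "a + m"] k \<open>a < b\<close> by simp
    finally show ?thesis .
  qed
qed

lemma BP_subset_UN_window:
  assumes "t2 < t1" and "t1 \<le> 0" and "BP X XT f pol t2 \<subseteq> BP X XT f pol t1" and "t \<le> t1"
  shows "BP X XT f pol t \<subseteq> (\<Union>s \<in> {t2<..t1}. BP X XT f pol s)"
proof -
  have "bp_nat X XT f pol (nat (- t)) \<subseteq> (\<Union>j \<in> {nat (- t1)..<nat (- t2)}. bp_nat X XT f pol j)"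
    using assms by (intro bp_nat_subset_UN_window) (auto simp: BP_def)
  also have "\<dots> \<subseteq> (\<Union>s \<in> {t2<..t1}. BP X XT f pol s)"
  proof (rule UN_least)
    fix j assume "j \<in> {nat (- t1)..<nat (- t2)}"
    then have "- int j \<in> {t2<..t1}" and "BP X XT f pol (- int j) = bp_nat X XT f pol j"
      using assms(2) by (auto simp: BP_def)
    then show "bp_nat X XT f pol j \<subseteq> (\<Union>s \<in> {t2<..t1}. BP X XT f pol s)"
      by blast
  qed
  finally show ?thesis
    by (simp add: BP_def)
qed

theorem mainTheorem2:
  fixes X XT :: "(real ^ 'n) set"
    and f :: "real ^ 'n \<Rightarrow> real ^ 'm \<Rightarrow> real ^ 'n"
    and pol :: "real ^ 'n \<Rightarrow> real ^ 'm"
    and Pbar :: "int \<Rightarrow> (real ^ 'n) set"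
    and t1 t2 :: int
  assumes "t2 < t1" and "t1 \<le> 0"
    and "\<And>t. t2 \<le> t \<Longrightarrow> t \<le> t1 - 1 \<Longrightarrow> BP X XT f pol t \<subseteq> Pbar t"
    and "Pbar t2 \<subseteq> BP X XT f pol t1"
  shows "\<forall>t \<le> t1. BP X XT f pol t \<subseteq> BP X XT f pol t1 \<union> (\<Union>t' \<in> {t2..t1 - 1}. Pbar t')"
proof (intro allI impI)
  fix t assume "t \<le> t1"
  let ?I = "BP X XT f pol t1 \<union> (\<Union>t' \<in> {t2..t1 - 1}. Pbar t')"
  have "BP X XT f pol t2 \<subseteq> Pbar t2"
    using assms(1) by (intro assms(3)) auto
  then have P_t2_subset_P_t1: "BP X XT f pol t2 \<subseteq> BP X XT f pol t1"
    using assms(4) by (rule order_trans)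
  have "BP X XT f pol t \<subseteq> (\<Union>s \<in> {t2<..t1}. BP X XT f pol s)"
    using assms(1,2) P_t2_subset_P_t1 \<open>t \<le> t1\<close> by (rule BP_subset_UN_window)
  also have "\<dots> \<subseteq> ?I"
  proof (rule UN_least)
    fix s assume "s \<in> {t2<..t1}"
    show "BP X XT f pol s \<subseteq> ?I"
    proof (cases "s = t1")
      case False
      with \<open>s \<in> {t2<..t1}\<close> have "s \<in> {t2..t1 - 1}"
        by auto
      then have "BP X XT f pol s \<subseteq> Pbar s"
        by (intro assms(3)) auto
      with \<open>s \<in> {t2..t1 - 1}\<close> show ?thesis
        by blast
    qed simp
  qed
  finally show "BP X XT f pol t \<subseteq> ?I" .
qed

end
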